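(* Let $A\in\mathbb{F}_q^{m\times k}$ be a nonzero matrix and let $S\subseteq\mathbb{F}_q^n$ satisfy $|S|\ge q^{1+(1-\frac1k)n}$. Then there exist $(x_1,\dots,x_k),(y_1,\dots,y_k)\in S^k$ such that for all $b=(b_1,\dots,b_k)\in\mathbb{F}_q^k$ one has $b_1x_1+\dots+b_kx_k=b_1y_1+\dots+b_ky_k$ if and only if $b$ is a linear combination of the rows of $A$. *)

theory Defs
  imports "HOL-Analysis.Analysis"
begin

definition lin_comb :: "('a::field) ^ 'k \<Rightarrow> ('k::finite \<Rightarrow> 'a ^ 'n) \<Rightarrow> 'a ^ 'n" where
  "lin_comb b x = (\<chi> l. \<Sum>j\<in>UNIV. b $ j * (x j) $ l)"

definition in_row_space :: "('a::field) ^ 'k ^ 'm::finite \<Rightarrow> 'a ^ 'k \<Rightarrow> bool" where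
  "in_row_space A b \<longleftrightarrow> (\<exists>c :: 'a ^ 'm. b = (\<chi> j. \<Sum>i\<in>UNIV. c $ i * A $ i $ j))"

end

theory Submission
  imports Defs
begin

text \<open>Let \<open>R\<close> be the row space of \<open>A\<close>, of dimension \<open>r \<ge> 1\<close>, written in reduced echelon
  form with pivot set \<open>P\<close> and basis vectors \<open>e\<^sub>p\<close>. By pigeonhole some class \<open>F\<close> of tuples in
  \<open>S\<^sup>k\<close> with equal values of the \<open>r\<close> combinations \<open>\<Sum>\<^sub>j (e\<^sub>p)\<^sub>j x\<^sub>j\<close> has at least
  \<open>|S|\<^sup>k / q\<^sup>n\<^sup>r\<close> elements; fix \<open>x \<in> F\<close>. Every \<open>y \<in> F\<close> satisfies \<open>b\<cdot>x = b\<cdot>y\<close> for \<open>b \<in> R\<close>.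
  Every \<open>b \<notin> R\<close> differs from an element of \<open>R\<close> by a nonzero \<open>c\<close> vanishing on \<open>P\<close>, and
  \<open>c\<cdot>y = c\<cdot>x\<close> holds for at most \<open>|S|\<^sup>k\<^sup>-\<^sup>r\<^sup>-\<^sup>1\<close> tuples \<open>y \<in> F\<close>, because such \<open>y\<close> is
  determined by its entries outside \<open>P \<union> {j}\<close> where \<open>c\<^sub>j \<noteq> 0\<close>. There are fewer than
  \<open>q\<^sup>k\<^sup>-\<^sup>r\<close> such \<open>c\<close>, and the density hypothesis gives \<open>q\<^sup>k\<^sup>-\<^sup>r |S|\<^sup>k\<^sup>-\<^sup>r\<^sup>-\<^sup>1 < |F|\<close>,
  so some \<open>y \<in> F\<close> avoids all of them.\<close>

lemma lin_comb_nth: "lin_comb b x $ l = (\<Sum>j\<in>UNIV. b $ j * x j $ l)"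
  by (simp add: lin_comb_def)

lemma lin_comb_diff: "lin_comb (b - b') x = lin_comb b x - lin_comb b' x"
  by (simp add: vec_eq_iff lin_comb_nth algebra_simps sum_subtractf)

lemma lin_comb_sum_smult:
  "lin_comb (\<Sum>p\<in>P. f p *s g p) x = (\<Sum>p\<in>P. f p *s lin_comb (g p) x)"
  by (simp add: vec_eq_iff lin_comb_nth sum_distrib_left sum_distrib_right mult.assoc
      sum.swap[of _ UNIV P])

lemma lin_comb_eq_imp_eq_at:
  assumes eq: "lin_comb c y = lin_comb c z" and nz: "c $ j \<noteq> 0"
    and others: "\<And>i. i \<noteq> j \<Longrightarrow> c $ i = 0 \<or> y i = z i"
  shows "y j = z j"
proof -
  have "c $ j * y j $ l = c $ j * z j $ l" for l
  proof -
    have "(\<Sum>i\<in>UNIV. c $ i * y i $ l) = (\<Sum>i\<in>UNIV. c $ i * z i $ l)"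
      using eq by (metis lin_comb_nth)
    moreover have "(\<Sum>i\<in>UNIV-{j}. c $ i * y i $ l) = (\<Sum>i\<in>UNIV-{j}. c $ i * z i $ l)"
    proof (rule sum.cong)
      show "c $ i * y i $ l = c $ i * z i $ l" if "i \<in> UNIV - {j}" for i
        using others[of i] that by auto
    qed simp
    ultimately show ?thesis by (simp add: sum.remove[of UNIV j])
  qed
  with nz show ?thesis by (simp add: vec_eq_iff)
qed

lemma eq_if_lin_comb_eq_on_pivots:
  assumes unit: "\<And>p p'. p \<in> P \<Longrightarrow> p' \<in> P \<Longrightarrow> e p $ p' = (if p' = p then 1 else 0)"
    and eq: "\<And>p. p \<in> P \<Longrightarrow> lin_comb (e p) y = lin_comb (e p) z"
    and outside: "\<And>j. j \<notin> P \<Longrightarrow> y j = z j"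
  shows "y = z"
proof
  fix j
  show "y j = z j"
  proof (cases "j \<in> P")
    case True
    show ?thesis
    proof (rule lin_comb_eq_imp_eq_at[OF eq[OF True]])
      show "e j $ j \<noteq> 0" using unit True by simp
      show "e j $ i = 0 \<or> y i = z i" if "i \<noteq> j" for i
        using unit[OF True, of i] outside[of i] that by (cases "i \<in> P") auto
    qed
  qed (use outside in auto)
qed

text \<open>The reduced row echelon form of a subspace \<open>R\<close> of \<open>F\<^sup>k\<close>: \<open>P\<close> is the set of pivot
  columns and \<open>e p\<close> the basis vector with pivot \<open>p\<close>.\<close>
definition pivot_basis :: "('a::field ^ 'k) set \<Rightarrow> 'k set \<Rightarrow> ('k \<Rightarrow> 'a ^ 'k) \<Rightarrow> bool" where
  "pivot_basis R P e \<longleftrightarrow>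
     (\<forall>p\<in>P. e p \<in> R \<and> (\<forall>p'\<in>P. e p $ p' = (if p' = p then 1 else 0))) \<and>
     (\<forall>u\<in>R. (\<forall>p\<in>P. u $ p = 0) \<longrightarrow> u = 0)"

lemma subspace_restriction_to_pivots:
  fixes R :: "('a::field ^ 'k::finite) set"
  assumes "vec.subspace R"
  obtains P where "\<forall>t::'k \<Rightarrow> 'a. \<exists>u\<in>R. \<forall>p\<in>P. u $ p = t p"
    and "\<forall>u\<in>R. (\<forall>p\<in>P. u $ p = 0) \<longrightarrow> u = 0"
proof -
  \<comment> \<open>Take \<open>P\<close> maximal among the coordinate sets onto which \<open>R\<close> projects surjectively; a
    nonzero \<open>u \<in> R\<close> vanishing on \<open>P\<close> would allow adding any \<open>j\<close> with \<open>u $ j \<noteq> 0\<close>.\<close>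
  let ?onto = "\<lambda>P. \<forall>t::'k \<Rightarrow> 'a. \<exists>u\<in>R. \<forall>p\<in>P. u $ p = t p"
  have "?onto {}" using vec.subspace_0[OF assms] by auto
  moreover have "\<forall>P. ?onto P \<longrightarrow> card P < Suc CARD('k)"
    using card_mono[of "UNIV :: 'k set"] by (simp add: less_Suc_eq_le)
  ultimately have "\<exists>P. ?onto P \<and> (\<forall>P'. ?onto P' \<longrightarrow> card P' \<le> card P)"
    by (rule Lattices_Big.ex_has_greatest_nat)
  then obtain P where onto: "?onto P" and maximal: "\<And>P'. ?onto P' \<Longrightarrow> card P' \<le> card P"
    by blast
  have "u = 0" if uR: "u \<in> R" and u0: "\<forall>p\<in>P. u $ p = 0" for u
  proof (rule ccontr)
    assume "u \<noteq> 0"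
    then obtain j where j: "u $ j \<noteq> 0" by (auto simp: vec_eq_iff)
    with u0 have "j \<notin> P" by auto
    moreover have "card (insert j P) \<le> card P"
    proof (rule maximal, rule allI)
      fix t :: "'k \<Rightarrow> 'a"
      obtain w where wR: "w \<in> R" and wt: "\<forall>p\<in>P. w $ p = t p" using onto by blast
      let ?w = "w + ((t j - w $ j) / u $ j) *s u"
      have "?w \<in> R" using wR uR assms by (simp add: vec.subspace_add vec.subspace_scale)
      moreover have "\<forall>p\<in>insert j P. ?w $ p = t p" using wt u0 j by auto
      ultimately show "\<exists>u\<in>R. \<forall>p\<in>insert j P. u $ p = t p" by blast
    qed
    ultimately show False by simp
  qed
  with onto that show ?thesis by blast
qed

lemma subspace_has_pivot_basis:
  fixes R :: "('a::field ^ 'k::finite) set"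
  assumes "vec.subspace R"
  obtains P e where "pivot_basis R P e"
proof -
  obtain P where onto: "\<forall>t::'k \<Rightarrow> 'a. \<exists>u\<in>R. \<forall>p\<in>P. u $ p = t p"
    and inj: "\<forall>u\<in>R. (\<forall>p\<in>P. u $ p = 0) \<longrightarrow> u = 0"
    using subspace_restriction_to_pivots[OF assms] by blast
  define e where "e p = (SOME u. u \<in> R \<and> (\<forall>p'\<in>P. u $ p' = (if p' = p then 1 else 0)))" for p
  have "e p \<in> R \<and> (\<forall>p'\<in>P. e p $ p' = (if p' = p then 1 else 0))" for p
    unfolding e_def
    by (rule someI_ex) (use onto[rule_format, of "\<lambda>p'. if p' = p then 1 else 0"] in blast)
  with inj have "pivot_basis R P e" by (simp add: pivot_basis_def)
  with that show ?thesis .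
qed

lemma pivot_basis_sum_nth:
  assumes "pivot_basis R P e" "p \<in> P" "finite P"
  shows "(\<Sum>p'\<in>P. b $ p' *s e p') $ p = b $ p"
proof -
  have "(\<Sum>p'\<in>P. b $ p' *s e p') $ p = (\<Sum>p'\<in>P. if p' = p then b $ p' else 0)"
    unfolding sum_component vector_smult_component
    by (rule sum.cong) (use assms in \<open>auto simp: pivot_basis_def\<close>)
  with assms show ?thesis by simp
qed

lemma pivot_basis_expansion:
  fixes R :: "('a::field ^ 'k::finite) set"
  assumes R: "vec.subspace R" and pb: "pivot_basis R P e"
  shows "b \<in> R \<longleftrightarrow> b = (\<Sum>p\<in>P. b $ p *s e p)"
proof -
  have "e p \<in> R" if "p \<in> P" for p using pb that by (simp add: pivot_basis_def)
  then have sum_in: "(\<Sum>p\<in>P. b $ p *s e p) \<in> R"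
    by (simp add: vec.subspace_sum[OF R] vec.subspace_scale[OF R])
  show ?thesis
  proof
    assume "b \<in> R"
    then have "b - (\<Sum>p\<in>P. b $ p *s e p) \<in> R" using sum_in vec.subspace_diff[OF R] by blast
    moreover have "\<forall>p\<in>P. (b - (\<Sum>p\<in>P. b $ p *s e p)) $ p = 0"
      using pivot_basis_sum_nth[OF pb] by simp
    ultimately have "b - (\<Sum>p\<in>P. b $ p *s e p) = 0" using pb unfolding pivot_basis_def by blast
    then show "b = (\<Sum>p\<in>P. b $ p *s e p)" by simp
  qed (metis sum_in)
qed

lemma lin_comb_eq_iff_mem_subspace:
  fixes R :: "('a::field ^ 'k::finite) set"
  assumes R: "vec.subspace R" and pb: "pivot_basis R P e"
    and on_basis: "\<And>p. p \<in> P \<Longrightarrow> lin_comb (e p) x = lin_comb (e p) y"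
    and separating: "\<And>c. c \<noteq> 0 \<Longrightarrow> \<forall>p\<in>P. c $ p = 0 \<Longrightarrow> lin_comb c x \<noteq> lin_comb c y"
  shows "lin_comb b x = lin_comb b y \<longleftrightarrow> b \<in> R"
proof -
  define b' where "b' = (\<Sum>p\<in>P. b $ p *s e p)"
  have "lin_comb b' x = lin_comb b' y"
    unfolding b'_def lin_comb_sum_smult by (rule sum.cong) (simp_all add: on_basis)
  moreover have "\<forall>p\<in>P. (b - b') $ p = 0"
    using pivot_basis_sum_nth[OF pb] by (simp add: b'_def)
  ultimately have "lin_comb b x = lin_comb b y \<longleftrightarrow> b = b'"
    using separating[of "b - b'"] by (auto simp: lin_comb_diff)
  also have "\<dots> \<longleftrightarrow> b \<in> R"
    using pivot_basis_expansion[OF R pb] by (simp add: b'_def)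
  finally show ?thesis .
qed

lemma card_le_power_if_inj_on_restrict:
  assumes inj: "inj_on (\<lambda>y. restrict (g y) Q) Y"
    and range: "\<And>y j. y \<in> Y \<Longrightarrow> j \<in> Q \<Longrightarrow> g y j \<in> S"
    and "finite Q" "finite S"
  shows "card Y \<le> card S ^ card Q"
proof -
  have "card Y = card ((\<lambda>y. restrict (g y) Q) ` Y)" using inj by (simp add: card_image)
  also have "\<dots> \<le> card (PiE Q (\<lambda>_. S))"
    using range assms(3,4) by (intro card_mono finite_PiE) auto
  also have "\<dots> = card S ^ card Q" using assms(3) by (simp add: card_PiE)
  finally show ?thesis .
qed

lemma exists_large_fiber:
  assumes "finite X" "X \<noteq> {}"
  obtains x where "x \<in> X" "card X \<le> card (g ` X) * card {x'\<in>X. g x' = g x}"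
proof -
  define m where "m v = card {x'\<in>X. g x' = v}" for v
  have "m v < Suc (card X)" for v
    unfolding m_def using assms(1) by (simp add: card_mono le_imp_less_Suc)
  then have "\<exists>x. x \<in> X \<and> (\<forall>x'. x' \<in> X \<longrightarrow> m (g x') \<le> m (g x))"
    using assms(2) Lattices_Big.ex_has_greatest_nat[of "\<lambda>x. x \<in> X" _ "\<lambda>x. m (g x)"] by blast
  then obtain x where x: "x \<in> X" and max: "\<And>x'. x' \<in> X \<Longrightarrow> m (g x') \<le> m (g x)" by blast
  have "card X = card (\<Union>v\<in>g ` X. {x'\<in>X. g x' = v})" by (rule arg_cong[of _ _ card]) blast
  also have "\<dots> \<le> (\<Sum>v\<in>g ` X. m v)" unfolding m_def using assms(1) by (intro card_UN_le) simp
  also have "\<dots> \<le> card (g ` X) * m (g x)" using sum_bounded_above[of "g ` X" m] max by auto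
  finally show ?thesis using that x by (simp add: m_def)
qed

lemma card_common_value_le:
  fixes c :: "'a::field ^ 'k::finite" and S :: "('a ^ 'n) set"
  assumes unit: "\<And>p p'. p \<in> P \<Longrightarrow> p' \<in> P \<Longrightarrow> e p $ p' = (if p' = p then 1 else 0)"
    and const: "\<And>p y z. p \<in> P \<Longrightarrow> y \<in> F \<Longrightarrow> z \<in> F \<Longrightarrow> lin_comb (e p) y = lin_comb (e p) z"
    and F: "\<And>y j. y \<in> F \<Longrightarrow> y j \<in> S" and "finite S"
    and "c \<noteq> 0" and c: "\<forall>p\<in>P. c $ p = 0"
  shows "card {y\<in>F. lin_comb c y = w} \<le> card S ^ (CARD('k) - card P - 1)"
proof -
  obtain j0 where j0: "c $ j0 \<noteq> 0" using \<open>c \<noteq> 0\<close> by (auto simp: vec_eq_iff)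
  with c have "j0 \<notin> P" by auto
  \<comment> \<open>\<open>y\<close> is determined by its entries on \<open>Q\<close>: first \<open>y j0\<close> through \<open>c\<close>, then the pivot
    entries through the \<open>e p\<close>.\<close>
  define Q where "Q = - P - {j0}"
  have "card Q = CARD('k) - card P - 1"
    using \<open>j0 \<notin> P\<close> by (simp add: Q_def Compl_eq_Diff_UNIV card_Diff_subset)
  moreover have "inj_on (\<lambda>y. restrict y Q) {y\<in>F. lin_comb c y = w}"
  proof (rule inj_onI)
    fix y z
    assume y: "y \<in> {y\<in>F. lin_comb c y = w}" and z: "z \<in> {y\<in>F. lin_comb c y = w}"
      and "restrict y Q = restrict z Q"
    then have agree: "\<And>j. j \<in> Q \<Longrightarrow> y j = z j" by (metis restrict_apply')
    have "y j0 = z j0"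
      by (rule lin_comb_eq_imp_eq_at[of c, OF _ j0]) (use y z agree c in \<open>auto simp: Q_def\<close>)
    with agree have "\<And>j. j \<notin> P \<Longrightarrow> y j = z j" by (auto simp: Q_def)
    with y z show "y = z" by (intro eq_if_lin_comb_eq_on_pivots[OF unit]) (auto intro: const)
  qed
  moreover have "\<And>y j. y \<in> {y\<in>F. lin_comb c y = w} \<Longrightarrow> y j \<in> S" using F by blast
  ultimately show ?thesis
    using card_le_power_if_inj_on_restrict[of "\<lambda>y. y" Q "{y\<in>F. lin_comb c y = w}" S] \<open>finite S\<close> by simp
qed

lemma card_union_common_values_le:
  fixes S :: "('a::field ^ 'n) set" and w :: "'a ^ 'k::finite \<Rightarrow> 'a ^ 'n"
  assumes unit: "\<And>p p'. p \<in> P \<Longrightarrow> p' \<in> P \<Longrightarrow> e p $ p' = (if p' = p then 1 else 0)"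
    and const: "\<And>p y z. p \<in> P \<Longrightarrow> y \<in> F \<Longrightarrow> z \<in> F \<Longrightarrow> lin_comb (e p) y = lin_comb (e p) z"
    and F: "\<And>y j. y \<in> F \<Longrightarrow> y j \<in> S" and "finite S"
    and V: "V \<subseteq> {c. c \<noteq> 0 \<and> (\<forall>p\<in>P. c $ p = 0)}" and "finite V"
  shows "card (\<Union>c\<in>V. {y\<in>F. lin_comb c y = w c}) \<le> card V * card S ^ (CARD('k) - card P - 1)"
proof -
  have "card (\<Union>c\<in>V. {y\<in>F. lin_comb c y = w c}) \<le> (\<Sum>c\<in>V. card {y\<in>F. lin_comb c y = w c})"
    using \<open>finite V\<close> by (rule card_UN_le)
  also have "\<dots> \<le> card V * card S ^ (CARD('k) - card P - 1)"
  proof -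
    have "card {y\<in>F. lin_comb c y = w c} \<le> card S ^ (CARD('k) - card P - 1)" if "c \<in> V" for c
      by (rule card_common_value_le[where e=e and P=P and F=F and S=S])
        (use unit const F \<open>finite S\<close> V that in blast)+
    then show ?thesis
      using sum_bounded_above[of V "\<lambda>c. card {y\<in>F. lin_comb c y = w c}"] by simp
  qed
  finally show ?thesis .
qed

lemma card_nonzero_vanishing_on_less:
  "card {c :: 'a::{zero,finite} ^ 'k::finite. c \<noteq> 0 \<and> (\<forall>p\<in>P. c $ p = 0)}
     < CARD('a) ^ (CARD('k) - card P)"
proof -
  let ?V = "{c :: 'a ^ 'k. \<forall>p\<in>P. c $ p = 0}"
  have "inj_on (\<lambda>c. restrict (vec_nth c) (- P)) ?V"
  proof (rule inj_onI)
    fix c d assume "c \<in> ?V" "d \<in> ?V" "restrict (vec_nth c) (- P) = restrict (vec_nth d) (- P)"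
    then show "c = d" by (simp add: vec_eq_iff) (metis ComplI restrict_apply')
  qed
  then have "card ?V \<le> CARD('a) ^ card (- P)"
    using card_le_power_if_inj_on_restrict[of vec_nth "- P" ?V UNIV] by simp
  moreover have "card (- P) = CARD('k) - card P"
    by (simp add: Compl_eq_Diff_UNIV card_Diff_subset)
  moreover have "card (?V - {0}) < card ?V" by (rule card_Diff1_less) simp_all
  moreover have "{c. c \<noteq> 0 \<and> (\<forall>p\<in>P. c $ p = 0)} = ?V - {0}" by auto
  ultimately show ?thesis by simp
qed

lemma power_exponent_inequality:
  fixes q s K N r :: nat
  assumes q: "2 \<le> q" and s_lower: "real q powr (1 + (1 - 1 / real K) * real N) \<le> real s"
    and s_upper: "s \<le> q ^ N" and r: "1 \<le> r" "r < K"
  shows "q ^ (K - r + N * r) < s ^ (r + 1)"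
proof -
  define E where "E = 1 + (1 - 1 / real K) * real N"
  have "real q powr E \<le> real q powr real N"
    using s_lower s_upper q by (simp add: E_def powr_realpow flip: of_nat_power)
  then have "E \<le> real N" using q by simp
  \<comment> \<open>so the density hypothesis forces \<open>K \<le> N\<close>\<close>
  then have "1 \<le> real N / real K" using r by (simp add: E_def field_simps)
  then have "real K - real r - 1 \<le> (real N / real K) * (real K - real r - 1)"
    using r mult_right_mono[of 1 "real N / real K" "real K - real r - 1"] by simp
  moreover have "real (r + 1) * E - real (K - r + N * r)
      = 2 * real r + 1 - real K + (real N / real K) * (real K - real r - 1)"
    using r by (simp add: E_def of_nat_diff field_simps)
  ultimately have "real (K - r + N * r) < real (r + 1) * E" using r by linarith
  have q_pos: "0 < real q" using q by simp
  have "real (q ^ (K - r + N * r)) = real q powr real (K - r + N * r)"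
    by (simp only: of_nat_power powr_realpow[OF q_pos])
  also have "\<dots> < real q powr (real (r + 1) * E)"
    using q \<open>real (K - r + N * r) < real (r + 1) * E\<close> by simp
  also have "\<dots> = (real q powr E) ^ (r + 1)"
    using q by (simp only: powr_power[of "real q"] of_nat_eq_0_iff)
  also have "\<dots> \<le> real s ^ (r + 1)"
    using s_lower q by (intro power_mono) (simp_all add: E_def)
  finally show ?thesis by (simp only: of_nat_power[symmetric] of_nat_less_iff)
qed

text \<open>The union bound of the main argument: \<open>v\<close> counts the coefficient vectors \<open>c\<close>, each of
  which is satisfied by at most \<open>s\<^sup>K\<^sup>-\<^sup>r\<^sup>-\<^sup>1\<close> tuples of a fiber of size \<open>f\<close>.\<close>
lemma exceptions_less_fiber:
  fixes q s K N r v f :: nat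
  assumes q: "2 \<le> q" and s_lower: "real q powr (1 + (1 - 1 / real K) * real N) \<le> real s"
    and s_upper: "s \<le> q ^ N" and r: "1 \<le> r" "r \<le> K"
    and v: "v < q ^ (K - r)" and fiber: "s ^ K \<le> q ^ (N * r) * f"
  shows "v * s ^ (K - r - 1) < f"
proof -
  have "0 < real q powr (1 + (1 - 1 / real K) * real N)" using q by simp
  with s_lower have "0 < s" by linarith
  show ?thesis
  proof (cases "r = K")
    case True
    have "f \<noteq> 0" using fiber \<open>0 < s\<close> by (cases "f = 0") simp_all
    with True v show ?thesis by simp
  next
    case False
    then have "r < K" using r by simp
    have "v * s ^ (K - r - 1) * q ^ (N * r) \<le> q ^ (K - r) * s ^ (K - r - 1) * q ^ (N * r)"
      using v by (intro mult_right_mono) simp_all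
    also have "\<dots> = q ^ (K - r + N * r) * s ^ (K - r - 1)"
      by (simp only: power_add mult_ac)
    also have "\<dots> < s ^ (r + 1) * s ^ (K - r - 1)"
      using power_exponent_inequality[OF q s_lower s_upper r(1) \<open>r < K\<close>] \<open>0 < s\<close>
      by (intro mult_strict_right_mono) simp_all
    also have "\<dots> = s ^ K" using \<open>r < K\<close> by (simp only: power_add[symmetric]) simp
    also have "\<dots> \<le> f * q ^ (N * r)" using fiber by (simp only: mult.commute)
    finally show ?thesis by simp
  qed
qed

lemma exists_tuple_with_large_fiber:
  fixes e :: "'k::finite \<Rightarrow> 'a::{field,finite} ^ 'k" and S :: "('a ^ 'n::finite) set"
  assumes "S \<noteq> {}"
  obtains x where "\<forall>j. x j \<in> S"
    and "card S ^ CARD('k) \<le> CARD('a) ^ (CARD('n) * card P) *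
           card {y. (\<forall>j. y j \<in> S) \<and> (\<forall>p\<in>P. lin_comb (e p) y = lin_comb (e p) x)}"
proof -
  define T where "T = {x :: 'k \<Rightarrow> 'a ^ 'n. \<forall>j. x j \<in> S}"
  define pivot_values where "pivot_values y = restrict (\<lambda>p. lin_comb (e p) y) P"
    for y :: "'k \<Rightarrow> 'a ^ 'n"
  have T_eq: "T = PiE UNIV (\<lambda>_. S)" by (auto simp: T_def PiE_UNIV_domain Pi_def)
  have "finite T" "T \<noteq> {}" using assms by (simp_all add: T_eq finite_PiE PiE_eq_empty_iff)
  then obtain x where x: "x \<in> T" and large:
    "card T \<le> card (pivot_values ` T) * card {y\<in>T. pivot_values y = pivot_values x}"
    by (rule exists_large_fiber)
  have "card (pivot_values ` T) \<le> card (PiE P (\<lambda>_. UNIV :: ('a ^ 'n) set))"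
    by (intro card_mono finite_PiE) (auto simp: pivot_values_def)
  also have "\<dots> = CARD('a) ^ (CARD('n) * card P)" by (simp add: card_PiE power_mult)
  finally have "card T \<le> CARD('a) ^ (CARD('n) * card P) * card {y\<in>T. pivot_values y = pivot_values x}"
    using large by (meson le_trans mult_le_mono1)
  moreover have "card T = card S ^ CARD('k)" by (simp add: T_eq card_PiE)
  moreover have "{y\<in>T. pivot_values y = pivot_values x} =
      {y. (\<forall>j. y j \<in> S) \<and> (\<forall>p\<in>P. lin_comb (e p) y = lin_comb (e p) x)}"
    by (auto simp: T_def pivot_values_def fun_eq_iff restrict_def)
  ultimately show ?thesis using that x by (simp add: T_def)
qed

lemma exists_pair_separated_off_pivots:
  fixes e :: "'k::finite \<Rightarrow> 'a::{field,finite} ^ 'k" and S :: "('a ^ 'n::finite) set"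
  assumes unit: "\<And>p p'. p \<in> P \<Longrightarrow> p' \<in> P \<Longrightarrow> e p $ p' = (if p' = p then 1 else 0)"
    and "P \<noteq> {}"
    and S: "real CARD('a) powr (1 + (1 - 1 / real CARD('k)) * real CARD('n)) \<le> real (card S)"
  obtains x y where "\<forall>j. x j \<in> S" "\<forall>j. y j \<in> S"
    and "\<And>p. p \<in> P \<Longrightarrow> lin_comb (e p) x = lin_comb (e p) y"
    and "\<And>c. c \<noteq> 0 \<Longrightarrow> \<forall>p\<in>P. c $ p = 0 \<Longrightarrow> lin_comb c x \<noteq> lin_comb c y"
proof -
  have q: "2 \<le> CARD('a)" using card_mono[of UNIV "{0 :: 'a, 1}"] by simp
  then have "0 < real CARD('a) powr (1 + (1 - 1 / real CARD('k)) * real CARD('n))" by simp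
  with S have "S \<noteq> {}" by auto
  have s_upper: "card S \<le> CARD('a) ^ CARD('n)" using card_mono[of UNIV S] by simp
  have r: "1 \<le> card P" "card P \<le> CARD('k)"
    using \<open>P \<noteq> {}\<close> by (simp_all add: Suc_le_eq card_gt_0_iff card_mono)
  obtain x where x: "\<forall>j. x j \<in> S" and large: "card S ^ CARD('k) \<le> CARD('a) ^ (CARD('n) * card P) *
      card {y. (\<forall>j. y j \<in> S) \<and> (\<forall>p\<in>P. lin_comb (e p) y = lin_comb (e p) x)}"
    using exists_tuple_with_large_fiber[OF \<open>S \<noteq> {}\<close>] by blast
  define F where "F = {y. (\<forall>j. y j \<in> S) \<and> (\<forall>p\<in>P. lin_comb (e p) y = lin_comb (e p) x)}"
  define V where "V = {c :: 'a ^ 'k. c \<noteq> 0 \<and> (\<forall>p\<in>P. c $ p = 0)}"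
  define bad where "bad = (\<Union>c\<in>V. {y\<in>F. lin_comb c y = lin_comb c x})"
  have "card bad \<le> card V * card S ^ (CARD('k) - card P - 1)"
    unfolding bad_def
  proof (rule card_union_common_values_le[where e=e and P=P, OF unit])
    show "lin_comb (e p) y = lin_comb (e p) z" if "p \<in> P" "y \<in> F" "z \<in> F" for p y z
      using that by (simp add: F_def)
  qed (simp_all add: F_def V_def)
  also have "\<dots> < card F"
    by (rule exceptions_less_fiber[OF q S s_upper r])
      (simp_all add: V_def F_def card_nonzero_vanishing_on_less large)
  finally have "card bad < card F" .
  moreover have "finite bad" by simp
  ultimately have "\<not> F \<subseteq> bad" using card_mono leD by blast
  then obtain y where y: "y \<in> F" "y \<notin> bad" by blast
  show ?thesis
  proof (rule that[OF x])
    show "\<forall>j. y j \<in> S" using y(1) by (simp add: F_def)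
    show "lin_comb (e p) x = lin_comb (e p) y" if "p \<in> P" for p
      using y(1) that by (simp add: F_def)
    show "lin_comb c x \<noteq> lin_comb c y" if "c \<noteq> 0" "\<forall>p\<in>P. c $ p = 0" for c
      using y that by (auto simp: bad_def V_def)
  qed
qed

lemma exists_tuples_with_relation_space:
  fixes R :: "('a::{field,finite} ^ 'k::finite) set" and S :: "('a ^ 'n::finite) set"
  assumes R: "vec.subspace R" and "R \<noteq> {0}"
    and S: "real CARD('a) powr (1 + (1 - 1 / real CARD('k)) * real CARD('n)) \<le> real (card S)"
  shows "\<exists>x y. (\<forall>j. x j \<in> S) \<and> (\<forall>j. y j \<in> S) \<and> (\<forall>b. lin_comb b x = lin_comb b y \<longleftrightarrow> b \<in> R)"
proof -
  obtain P e where pb: "pivot_basis R P e" using subspace_has_pivot_basis[OF R] .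
  have "P \<noteq> {}"
  proof
    assume "P = {}"
    with pb have "\<forall>u\<in>R. u = 0" by (simp add: pivot_basis_def)
    with \<open>R \<noteq> {0}\<close> vec.subspace_0[OF R] show False by blast
  qed
  moreover have "\<And>p p'. p \<in> P \<Longrightarrow> p' \<in> P \<Longrightarrow> e p $ p' = (if p' = p then 1 else 0)"
    using pb by (simp add: pivot_basis_def)
  ultimately obtain x y where x: "\<forall>j. x j \<in> S" and y: "\<forall>j. y j \<in> S"
    and on_basis: "\<And>p. p \<in> P \<Longrightarrow> lin_comb (e p) x = lin_comb (e p) y"
    and separating: "\<And>c. c \<noteq> 0 \<Longrightarrow> \<forall>p\<in>P. c $ p = 0 \<Longrightarrow> lin_comb c x \<noteq> lin_comb c y"
    using exists_pair_separated_off_pivots[where P=P and e=e and S=S] S by blast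
  with lin_comb_eq_iff_mem_subspace[OF R pb on_basis separating] show ?thesis by blast
qed

lemma subspace_row_space: "vec.subspace {b. in_row_space A b}"
proof (unfold vec.subspace_def, intro conjI ballI allI)
  show "0 \<in> {b. in_row_space A b}"
    unfolding in_row_space_def by (auto intro!: exI[of _ 0] simp: vec_eq_iff)
next
  fix u v assume "u \<in> {b. in_row_space A b}" "v \<in> {b. in_row_space A b}"
  then obtain c d where "u = (\<chi> j. \<Sum>i\<in>UNIV. c $ i * A $ i $ j)" "v = (\<chi> j. \<Sum>i\<in>UNIV. d $ i * A $ i $ j)"
    unfolding in_row_space_def by blast
  then show "u + v \<in> {b. in_row_space A b}" unfolding in_row_space_def
    by (auto intro!: exI[of _ "c + d"] simp: vec_eq_iff algebra_simps sum.distrib)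
next
  fix a u assume "u \<in> {b. in_row_space A b}"
  then obtain c where "u = (\<chi> j. \<Sum>i\<in>UNIV. c $ i * A $ i $ j)"
    unfolding in_row_space_def by blast
  then show "a *s u \<in> {b. in_row_space A b}" unfolding in_row_space_def
    by (auto intro!: exI[of _ "a *s c"] simp: vec_eq_iff sum_distrib_left mult.assoc)
qed

lemma row_in_row_space: "in_row_space A (A $ i)"
  unfolding in_row_space_def
  by (rule exI[of _ "axis i 1"]) (simp add: vec_eq_iff axis_def if_distrib[of "\<lambda>x. x * _"] cong: if_cong)

theorem lemma4p1:
  fixes A :: "('a::{field,finite}) ^ 'k::finite ^ 'm::finite"
    and S :: "('a ^ 'n::finite) set"
  assumes "A \<noteq> 0"
    and "real (card S) \<ge> real CARD('a) powr (1 + (1 - 1 / real CARD('k)) * real CARD('n))"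
  shows "\<exists>x y :: 'k \<Rightarrow> 'a ^ 'n. (\<forall>j. x j \<in> S) \<and> (\<forall>j. y j \<in> S) \<and>
           (\<forall>b :: 'a ^ 'k. lin_comb b x = lin_comb b y \<longleftrightarrow> in_row_space A b)"
proof -
  obtain i where "A $ i \<noteq> 0" using \<open>A \<noteq> 0\<close> by (auto simp: vec_eq_iff)
  then have "{b. in_row_space A b} \<noteq> {0}" using row_in_row_space[of A i] by blast
  from exists_tuples_with_relation_space[OF subspace_row_space this assms(2)] show ?thesis by simp
qed

end
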